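(* For every integer $p \ge 1$ there exist an integer $k$ and a $k$-colourable $(K_4, \text{diamond}, \text{paw}, \text{co-claw}, \text{co-diamond})$-free graph $G$ that is not $(k+p)$-mixing.
   Context: All graphs are finite and simple. A $k$-colouring of $G$ is a map $\alpha: V(G)\to\{1,\dots,k\}$ with $\alpha(u)\neq\alpha(v)$ for every edge $uv$; $G$ is $k$-colourable if one exists. The reconfiguration graph $\mathcal{R}_k(G)$ has the $k$-colourings of $G$ as vertices, two being adjacent if they differ on exactly one vertex; $G$ is $k$-mixing if $\mathcal{R}_k(G)$ is connected. A graph is $\mathcal{H}$-free if it contains no induced subgraph isomorphic to any member of $\mathcal{H}$. The diamond is $K_4$ minus one edge; the paw is a triangle with a pendant vertex attached to one triangle vertex; the co-claw is $K_3+K_1$ (a triangle plus an isolated vertex); the co-diamond is $K_2+2K_1$ (one edge plus two isolated vertices). *)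

theory Defs
  imports Main
begin

definition simple_graph :: "'a set \<Rightarrow> ('a \<Rightarrow> 'a \<Rightarrow> bool) \<Rightarrow> bool" where
  "simple_graph V E \<longleftrightarrow> finite V \<and> (\<forall>u v. E u v \<longrightarrow> u \<in> V \<and> v \<in> V)
     \<and> (\<forall>u v. E u v \<longrightarrow> E v u) \<and> (\<forall>v. \<not> E v v)"

definition contains_induced ::
  "'a set \<Rightarrow> ('a \<Rightarrow> 'a \<Rightarrow> bool) \<Rightarrow> 'b set \<Rightarrow> ('b \<Rightarrow> 'b \<Rightarrow> bool) \<Rightarrow> bool" where
  "contains_induced V E W F \<longleftrightarrow>
     (\<exists>f. inj_on f W \<and> f ` W \<subseteq> V \<and> (\<forall>u\<in>W. \<forall>v\<in>W. F u v \<longleftrightarrow> E (f u) (f v)))"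

definition four_vertices :: "nat set" where "four_vertices = {0,1,2,3}"

definition edges_rel :: "nat set set \<Rightarrow> nat \<Rightarrow> nat \<Rightarrow> bool" where
  "edges_rel S u v \<longleftrightarrow> u \<noteq> v \<and> {u, v} \<in> S"

definition K4_edges :: "nat set set" where
  "K4_edges = {{0,1},{0,2},{0,3},{1,2},{1,3},{2,3}}"
definition diamond_edges :: "nat set set" where
  "diamond_edges = {{0,1},{0,2},{0,3},{1,2},{1,3}}"
definition paw_edges :: "nat set set" where
  "paw_edges = {{0,1},{0,2},{1,2},{2,3}}"
definition coclaw_edges :: "nat set set" where
  "coclaw_edges = {{0,1},{0,2},{1,2}}"
definition codiamond_edges :: "nat set set" where
  "codiamond_edges = {{0,1}}"

definition H_free_5 :: "'a set \<Rightarrow> ('a \<Rightarrow> 'a \<Rightarrow> bool) \<Rightarrow> bool" where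
  "H_free_5 V E \<longleftrightarrow>
     (\<forall>S \<in> {K4_edges, diamond_edges, paw_edges, coclaw_edges, codiamond_edges}.
        \<not> contains_induced V E four_vertices (edges_rel S))"

text \<open>k-colourings: maps V to {1..k}, proper; normalised to 0 outside V so that
  colourings are determined by their values on V.\<close>
definition is_colouring :: "'a set \<Rightarrow> ('a \<Rightarrow> 'a \<Rightarrow> bool) \<Rightarrow> nat \<Rightarrow> ('a \<Rightarrow> nat) \<Rightarrow> bool" where
  "is_colouring V E k \<alpha> \<longleftrightarrow> (\<forall>v\<in>V. \<alpha> v \<in> {1..k}) \<and> (\<forall>v. v \<notin> V \<longrightarrow> \<alpha> v = 0)
     \<and> (\<forall>u v. E u v \<longrightarrow> \<alpha> u \<noteq> \<alpha> v)"

definition colourable :: "'a set \<Rightarrow> ('a \<Rightarrow> 'a \<Rightarrow> bool) \<Rightarrow> nat \<Rightarrow> bool" where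
  "colourable V E k \<longleftrightarrow> (\<exists>\<alpha>. is_colouring V E k \<alpha>)"

definition recol_edge :: "'a set \<Rightarrow> ('a \<Rightarrow> 'a \<Rightarrow> bool) \<Rightarrow> nat \<Rightarrow> (('a \<Rightarrow> nat) \<times> ('a \<Rightarrow> nat)) set" where
  "recol_edge V E k = {(\<alpha>, \<beta>). is_colouring V E k \<alpha> \<and> is_colouring V E k \<beta>
      \<and> card {v \<in> V. \<alpha> v \<noteq> \<beta> v} = 1}"

definition mixing :: "'a set \<Rightarrow> ('a \<Rightarrow> 'a \<Rightarrow> bool) \<Rightarrow> nat \<Rightarrow> bool" where
  "mixing V E k \<longleftrightarrow> (\<forall>\<alpha> \<beta>. is_colouring V E k \<alpha> \<longrightarrow> is_colouring V E k \<beta>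
      \<longrightarrow> (\<alpha>, \<beta>) \<in> (recol_edge V E k)\<^sup>*)"

end

theory Submission
  imports Defs
begin

text \<open>The crown graph on \<open>2n\<close> vertices (\<open>K\<^sub>n\<^sub>,\<^sub>n\<close> minus a perfect matching) is
  bipartite, triangle-free and co-diamond-free, hence free of all five forbidden graphs.
  Giving both ends of the \<open>i\<close>-th removed matching edge colour \<open>i\<close> yields an \<open>n\<close>-colouring
  in which every vertex sees every colour other than its own, so no single vertex can be
  recoloured: it is an isolated vertex of \<open>R\<^sub>n(G)\<close>. With \<open>n = p + 2\<close> and \<open>k = 2\<close> the
  graph is therefore not \<open>(k + p)\<close>-mixing.\<close>

definition frozen_colouring :: "'a set \<Rightarrow> ('a \<Rightarrow> 'a \<Rightarrow> bool) \<Rightarrow> nat \<Rightarrow> ('a \<Rightarrow> nat) \<Rightarrow> bool" where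
  "frozen_colouring V E k \<alpha> \<longleftrightarrow> is_colouring V E k \<alpha> \<and>
     (\<forall>v\<in>V. \<forall>c\<in>{1..k}. c \<noteq> \<alpha> v \<longrightarrow> (\<exists>w\<in>V. E v w \<and> \<alpha> w = c))"

lemma frozen_colouring_no_recol_edge:
  assumes "frozen_colouring V E k \<alpha>"
  shows "(\<alpha>, \<beta>) \<notin> recol_edge V E k"
proof
  assume "(\<alpha>, \<beta>) \<in> recol_edge V E k"
  then have \<beta>: "is_colouring V E k \<beta>" and "card {v \<in> V. \<alpha> v \<noteq> \<beta> v} = 1"
    unfolding recol_edge_def by simp_all
  then obtain v where changed: "{v \<in> V. \<alpha> v \<noteq> \<beta> v} = {v}"
    using card_1_singletonE by blast
  then have "v \<in> V" "\<beta> v \<noteq> \<alpha> v"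
    by (metis (mono_tags) mem_Collect_eq singletonI)+
  moreover have "\<beta> v \<in> {1..k}"
    using \<beta> \<open>v \<in> V\<close> unfolding is_colouring_def by blast
  ultimately obtain w where "w \<in> V" "E v w" "\<alpha> w = \<beta> v"
    using assms unfolding frozen_colouring_def by metis
  have "w \<noteq> v"
    using \<open>\<alpha> w = \<beta> v\<close> \<open>\<beta> v \<noteq> \<alpha> v\<close> by auto
  then have "w \<notin> {x \<in> V. \<alpha> x \<noteq> \<beta> x}"
    by (simp add: changed)
  with \<open>w \<in> V\<close> have "\<beta> w = \<alpha> w"
    by simp
  moreover have "\<beta> v \<noteq> \<beta> w"
    using \<beta> \<open>E v w\<close> unfolding is_colouring_def by blast
  ultimately show False
    using \<open>\<alpha> w = \<beta> v\<close> by simp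
qed

lemma not_mixing_if_frozen_colouring:
  assumes "frozen_colouring V E k \<alpha>" "is_colouring V E k \<beta>" "\<alpha> \<noteq> \<beta>"
  shows "\<not> mixing V E k"
proof
  assume "mixing V E k"
  then have "(\<alpha>, \<beta>) \<in> (recol_edge V E k)\<^sup>*"
    using assms(1,2) unfolding mixing_def frozen_colouring_def by blast
  with assms(3) obtain \<gamma> where "(\<alpha>, \<gamma>) \<in> recol_edge V E k"
    by (metis converse_rtranclE)
  with assms(1) show False
    using frozen_colouring_no_recol_edge by blast
qed

lemma H_free_5I:
  assumes triangle_free: "\<And>a b c. E a b \<Longrightarrow> E a c \<Longrightarrow> E b c \<Longrightarrow> False"
    and codiamond_free: "\<And>a b c d. E a b \<Longrightarrow> c \<in> V \<Longrightarrow> d \<in> V \<Longrightarrow> c \<noteq> d \<Longrightarrow>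
      \<not> E a c \<Longrightarrow> \<not> E a d \<Longrightarrow> \<not> E b c \<Longrightarrow> \<not> E b d \<Longrightarrow> \<not> E c d \<Longrightarrow> False"
  shows "H_free_5 V E"
  unfolding H_free_5_def
proof (intro ballI notI)
  fix S assume S: "S \<in> {K4_edges, diamond_edges, paw_edges, coclaw_edges, codiamond_edges}"
    and "contains_induced V E four_vertices (edges_rel S)"
  then obtain f where inj: "inj_on f four_vertices" and into: "f ` four_vertices \<subseteq> V"
    and induced_on: "\<forall>u\<in>four_vertices. \<forall>v\<in>four_vertices. edges_rel S u v \<longleftrightarrow> E (f u) (f v)"
    unfolding contains_induced_def by blast
  have induced: "edges_rel S u v \<longleftrightarrow> E (f u) (f v)" if "u \<in> {0,1,2,3}" "v \<in> {0,1,2,3}" for u v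
    using induced_on that unfolding four_vertices_def by blast
  show False
  proof (cases "S = codiamond_edges")
    case True
    then have "E (f 0) (f 1)" "\<not> E (f 0) (f 2)" "\<not> E (f 0) (f 3)"
      "\<not> E (f 1) (f 2)" "\<not> E (f 1) (f 3)" "\<not> E (f 2) (f 3)"
      using induced[of 0 1] induced[of 0 2] induced[of 0 3] induced[of 1 2] induced[of 1 3]
        induced[of 2 3]
      by (simp_all add: edges_rel_def codiamond_edges_def doubleton_eq_iff)
    moreover have "f 2 \<noteq> f 3"
      using inj_onD[OF inj, of 2 3] by (auto simp: four_vertices_def)
    moreover have "f 2 \<in> V" "f 3 \<in> V"
      using into by (auto simp: four_vertices_def)
    ultimately show False
      using codiamond_free by blast
  next
    case False
    \<comment> \<open>each of the other four graphs has the triangle \<open>{0,1,2}\<close>\<close>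
    with S have "edges_rel S 0 1 \<and> edges_rel S 0 2 \<and> edges_rel S 1 2"
      unfolding edges_rel_def K4_edges_def diamond_edges_def paw_edges_def coclaw_edges_def
      by (elim insertE; simp)
    then have "E (f 0) (f 1)" "E (f 0) (f 2)" "E (f 1) (f 2)"
      using induced[of 0 1] induced[of 0 2] induced[of 1 2] by simp_all
    then show False
      by (rule triangle_free)
  qed
qed

text \<open>Vertex \<open>v < 2n\<close> stands for the pair \<open>(v div 2, v mod 2)\<close> (column, side); two vertices
  are adjacent iff they lie on different sides and in different columns.\<close>

definition crown :: "nat \<Rightarrow> nat \<Rightarrow> nat \<Rightarrow> bool" where
  "crown n u v \<longleftrightarrow> u < 2*n \<and> v < 2*n \<and> u mod 2 \<noteq> v mod 2 \<and> u div 2 \<noteq> v div 2"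

lemma nat_eq_iff_mod_div_2: "(u::nat) = v \<longleftrightarrow> u mod 2 = v mod 2 \<and> u div 2 = v div 2"
  by (metis div_mult_mod_eq)

lemma simple_graph_crown: "simple_graph {..<2*n} (crown n)"
  unfolding simple_graph_def crown_def by auto

lemma crown_triangle_free: "crown n a b \<Longrightarrow> crown n a c \<Longrightarrow> crown n b c \<Longrightarrow> False"
  unfolding crown_def by (auto simp: mod2_eq_if split: if_splits)

lemma crown_common_non_neighbour:
  assumes "crown n a b" "c < 2*n" "\<not> crown n a c" "\<not> crown n b c"
  shows "c mod 2 = b mod 2 \<and> c div 2 = a div 2 \<or> c mod 2 = a mod 2 \<and> c div 2 = b div 2"
  using assms unfolding crown_def by (auto simp: mod2_eq_if split: if_splits)

lemma crown_codiamond_free: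
  assumes "crown n a b" "c < 2*n" "d < 2*n" "c \<noteq> d"
    "\<not> crown n a c" "\<not> crown n a d" "\<not> crown n b c" "\<not> crown n b d" "\<not> crown n c d"
  shows False
proof -
  have "a mod 2 \<noteq> b mod 2" "a div 2 \<noteq> b div 2"
    using assms(1) unfolding crown_def by auto
  moreover note crown_common_non_neighbour[OF assms(1,2,5,7)]
    crown_common_non_neighbour[OF assms(1,3,6,8)]
  ultimately show False
    using assms(2-4,9) nat_eq_iff_mod_div_2[of c d] unfolding crown_def by auto
qed

lemma H_free_5_crown: "H_free_5 {..<2*n} (crown n)"
  using crown_triangle_free crown_codiamond_free by (intro H_free_5I) blast+

definition column_colouring :: "nat \<Rightarrow> nat \<Rightarrow> nat" where
  "column_colouring n v = (if v < 2*n then v div 2 + 1 else 0)"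

definition side_colouring :: "nat \<Rightarrow> nat \<Rightarrow> nat" where
  "side_colouring n v = (if v < 2*n then v mod 2 + 1 else 0)"

lemma frozen_colouring_column_colouring:
  "frozen_colouring {..<2*n} (crown n) n (column_colouring n)"
  unfolding frozen_colouring_def
proof (intro conjI ballI impI)
  show "is_colouring {..<2*n} (crown n) n (column_colouring n)"
    unfolding is_colouring_def column_colouring_def crown_def by auto
next
  fix v c assume "v \<in> {..<2*n}" "c \<in> {1..n}" "c \<noteq> column_colouring n v"
  define w where "w = 2*(c - 1) + (1 - v mod 2)"
  have "w < 2*n" "w div 2 = c - 1" "w mod 2 \<noteq> v mod 2"
    using \<open>c \<in> {1..n}\<close> unfolding w_def by (auto simp: mod2_eq_if)
  with \<open>v \<in> {..<2*n}\<close> \<open>c \<in> {1..n}\<close> \<open>c \<noteq> column_colouring n v\<close>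
  show "\<exists>w\<in>{..<2*n}. crown n v w \<and> column_colouring n w = c"
    unfolding crown_def column_colouring_def by (intro bexI[of _ w]) auto
qed

lemma is_colouring_side_colouring:
  "k \<ge> 2 \<Longrightarrow> is_colouring {..<2*n} (crown n) k (side_colouring n)"
  unfolding is_colouring_def side_colouring_def crown_def by auto

lemma not_mixing_crown:
  assumes "n \<ge> 2"
  shows "\<not> mixing {..<2*n} (crown n) n"
proof (rule not_mixing_if_frozen_colouring)
  show "frozen_colouring {..<2*n} (crown n) n (column_colouring n)"
    by (rule frozen_colouring_column_colouring)
  show "is_colouring {..<2*n} (crown n) n (side_colouring n)"
    using assms by (rule is_colouring_side_colouring)
  have "column_colouring n 2 \<noteq> side_colouring n 2"
    using assms unfolding column_colouring_def side_colouring_def by auto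
  then show "column_colouring n \<noteq> side_colouring n"
    by metis
qed

theorem theorem5:
  shows "\<forall>p::nat. p \<ge> 1 \<longrightarrow> (\<exists>k::nat. \<exists>(V::nat set) E.
     simple_graph V E \<and> colourable V E k \<and> H_free_5 V E \<and> \<not> mixing V E (k + p))"
proof (intro allI impI)
  fix p :: nat
  let ?n = "p + 2"
  have "colourable {..<2*?n} (crown ?n) 2"
    using is_colouring_side_colouring[of 2] unfolding colourable_def by blast
  moreover have "\<not> mixing {..<2*?n} (crown ?n) (2 + p)"
    using not_mixing_crown[of ?n] by (simp add: add.commute)
  ultimately show "\<exists>k::nat. \<exists>(V::nat set) E.
     simple_graph V E \<and> colourable V E k \<and> H_free_5 V E \<and> \<not> mixing V E (k + p)"
    using simple_graph_crown H_free_5_crown by blast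
qed

end
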